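(* Let $R=DV$ be any decomposition of the boundary matrix of the cone filtration, and let $\sigma\in K$ and $\omega*\tau$ ($\tau\in K$) form a persistence pair, $\operatorname{low}R[\omega*\tau]=\sigma$, with $d=\min\sigma>b=\max\tau$. Let $c=V[\omega*\tau]\cap(\omega*K\setminus K)+V[\omega*\tau]\cap K_{\ge b}$ (the part of $V[\omega*\tau]$ on cone simplices and $\omega$, plus the part on base simplices in $K_{\ge b}$), and let $z=\partial c$. Then $z$ is a cycle supported in $K[b,d]=K_{\ge b}\cap K_{\le d}$ (so $[z]\in H(K[b,d])$), and $\sigma\in z$ and $\tau\in z$.
   Context: Coefficients are in a field $\mathbb F$. Let $K$ be a finite $\Delta$-complex in which every simplex $\sigma$ carries an integer interval $T(\sigma)=[\min\sigma,\max\sigma]$ with $\min\sigma<\max\sigma$, such that whenever $\sigma$ is a proper face of $\tau$, $\min\sigma<\min\tau<\max\tau<\max\sigma$; assume the values $\min\sigma$ ($\sigma\in K$) are pairwise distinct and the values $\max\sigma$ are pairwise distinct. Write $K_{\le i}=\{\sigma:\min\sigma\le i\}$, $K_{\ge j}=\{\sigma:\max\sigma\ge j\}$ (subcomplexes), and $K[b,d]=K_{\ge b}\cap K_{\le d}$. The cone $\omega*K$ consists of the simplices of $K$ ("base simplices"), a new vertex $\omega$, and simplices $\omega*\sigma$ for $\sigma\in K$ ("cone simplices"), with $\partial(\omega*\sigma)=\sigma-\omega*\partial\sigma$ (for a vertex $v$, $\partial(\omega*v)=v-\omega$). The cone filtration orders base simplices by increasing $\min$, then $\omega$, then the simplices $\omega*\sigma$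 by decreasing $\max\sigma$. $D$ is the boundary matrix of $\omega*K$ with rows and columns in this order; $R=DV$ denotes a decomposition with $V$ invertible upper-triangular and $R$ reduced (pivots $\operatorname{low}$ — lowest nonzero entries — of nonzero columns in distinct rows). "$\sigma\in c$" means the coefficient of $\sigma$ in chain $c$ is nonzero; $c\cap L$ is the restriction of chain $c$ to simplices in $L$; a chain is supported in $L$ if all its nonzero coefficients are on simplices of $L$. *)

theory Defs
  imports Main "HOL-Library.Product_Lexorder"
begin

definition delta_complex :: "'a set \<Rightarrow> ('a \<Rightarrow> nat) \<Rightarrow> ('a \<Rightarrow> nat \<Rightarrow> 'a) \<Rightarrow> bool" where
  "delta_complex K dim face \<longleftrightarrow> finite K \<and>
     (\<forall>s\<in>K. 0 < dim s \<longrightarrow> (\<forall>i\<le>dim s. face s i \<in> K \<and> dim (face s i) = dim s - 1)) \<and>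
     (\<forall>s\<in>K. 2 \<le> dim s \<longrightarrow> (\<forall>i j. i < j \<and> j \<le> dim s \<longrightarrow>
         face (face s j) i = face (face s i) (j - 1)))"

definition face_rel :: "'a set \<Rightarrow> ('a \<Rightarrow> nat) \<Rightarrow> ('a \<Rightarrow> nat \<Rightarrow> 'a) \<Rightarrow> ('a \<times> 'a) set" where
  "face_rel K dim face = {(face t i, t) | t i. t \<in> K \<and> 0 < dim t \<and> i \<le> dim t}"

definition proper_face :: "'a set \<Rightarrow> ('a \<Rightarrow> nat) \<Rightarrow> ('a \<Rightarrow> nat \<Rightarrow> 'a) \<Rightarrow> 'a \<Rightarrow> 'a \<Rightarrow> bool" where
  "proper_face K dim face s t \<longleftrightarrow> (s, t) \<in> (face_rel K dim face)\<^sup>+"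

text \<open>Simplices of the cone omega * K: base simplices, the apex omega, cone simplices.\<close>
datatype 'a cone_simplex = Base 'a | Apex | Cone 'a

definition cone_cx :: "'a set \<Rightarrow> 'a cone_simplex set" where
  "cone_cx K = Base ` K \<union> {Apex} \<union> Cone ` K"

text \<open>Position key of the cone filtration: base simplices by increasing min,
  then omega, then cone simplices by decreasing max (lexicographic order).\<close>
fun filt_key :: "('a \<Rightarrow> int) \<Rightarrow> ('a \<Rightarrow> int) \<Rightarrow> 'a cone_simplex \<Rightarrow> int \<times> int" where
  "filt_key mn mx (Base s) = (0, mn s)"
| "filt_key mn mx Apex = (1, 0)"
| "filt_key mn mx (Cone s) = (2, - mx s)"

definition bd_coeff :: "('a \<Rightarrow> nat) \<Rightarrow> ('a \<Rightarrow> nat \<Rightarrow> 'a) \<Rightarrow> 'a \<Rightarrow> 'a \<Rightarrow> 'f::field" where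
  "bd_coeff dim face s r =
     (if dim s = 0 then 0 else (\<Sum>i\<in>{..dim s}. if face s i = r then (-1) ^ i else 0))"

text \<open>Boundary matrix D of omega * K: entry (row x, column y) is the coefficient of x
  in the boundary of y; with boundary of omega * s = s - omega * (boundary s), and
  boundary of omega * v = v - omega for a vertex v.\<close>
fun cone_bd :: "('a \<Rightarrow> nat) \<Rightarrow> ('a \<Rightarrow> nat \<Rightarrow> 'a) \<Rightarrow> 'a cone_simplex \<Rightarrow> 'a cone_simplex \<Rightarrow> 'f::field" where
  "cone_bd dim face (Base r) (Base s) = bd_coeff dim face s r"
| "cone_bd dim face (Cone r) (Cone s) = - bd_coeff dim face s r"
| "cone_bd dim face (Base r) (Cone s) = (if r = s then 1 else 0)"
| "cone_bd dim face Apex (Cone s) = (if dim s = 0 then -1 else 0)"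
| "cone_bd dim face _ _ = 0"

definition is_low :: "('a \<Rightarrow> int) \<Rightarrow> ('a \<Rightarrow> int) \<Rightarrow> 'a set \<Rightarrow> ('a cone_simplex \<Rightarrow> 'f::zero) \<Rightarrow> 'a cone_simplex \<Rightarrow> bool" where
  "is_low mn mx K col x \<longleftrightarrow> x \<in> cone_cx K \<and> col x \<noteq> 0 \<and>
     (\<forall>y\<in>cone_cx K. col y \<noteq> 0 \<longrightarrow> filt_key mn mx y \<le> filt_key mn mx x)"

end

theory Submission
  imports Defs
begin

text \<open>The chain c agrees with the column V[\<omega>*\<tau>] except on base simplices s with max s < b,
  so z = \<partial>c differs from R[\<omega>*\<tau>] = \<partial>V[\<omega>*\<tau>] only on proper faces r of such s, and these
  satisfy min r < min s < max s < b < d. Hence z coincides with R[\<omega>*\<tau>] at \<sigma> and at every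
  simplex with min > d; as low R[\<omega>*\<tau>] = \<sigma>, the column R[\<omega>*\<tau>] vanishes on \<omega> and on cone
  simplices, which forces z to live on base simplices with min \<le> d. Every base simplex in
  z is a face of a simplex of c, hence has max \<ge> b, because faces have larger max and V is
  upper triangular. Finally z(\<tau>) = V[\<omega>*\<tau>](\<omega>*\<tau>), a diagonal entry of an invertible
  triangular matrix, and \<partial>z = 0 because \<partial>\<partial> = 0 on the cone.\<close>

lemma delta_complex_finite: "delta_complex K dim face \<Longrightarrow> finite K"
  unfolding delta_complex_def by (elim conjE)

lemma delta_complex_face:
  "delta_complex K dim face \<Longrightarrow> s \<in> K \<Longrightarrow> 0 < dim s \<Longrightarrow> i \<le> dim s \<Longrightarrow>
   face s i \<in> K \<and> dim (face s i) = dim s - 1"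
  unfolding delta_complex_def by (elim conjE) (drule bspec, assumption, drule mp, assumption, blast)

lemma delta_complex_face_face:
  "delta_complex K dim face \<Longrightarrow> s \<in> K \<Longrightarrow> 2 \<le> dim s \<Longrightarrow> i < j \<Longrightarrow> j \<le> dim s \<Longrightarrow>
   face (face s j) i = face (face s i) (j - 1)"
  unfolding delta_complex_def
  by (elim conjE) (drule bspec[where x=s], assumption, drule mp, assumption, blast)

lemma finite_cone_cx: "finite K \<Longrightarrow> finite (cone_cx K)"
  unfolding cone_cx_def by simp

lemma cone_cx_simps [simp]:
  "Base s \<in> cone_cx K \<longleftrightarrow> s \<in> K" "Cone s \<in> cone_cx K \<longleftrightarrow> s \<in> K" "Apex \<in> cone_cx K"
  unfolding cone_cx_def by auto

lemma sum_cone_cx: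
  assumes "finite K"
  shows "(\<Sum>u\<in>cone_cx K. f u) = (\<Sum>s\<in>K. f (Base s)) + f Apex + (\<Sum>s\<in>K. f (Cone s))"
proof -
  have "cone_cx K = (Base ` K \<union> {Apex}) \<union> Cone ` K" unfolding cone_cx_def by auto
  moreover have "(\<Sum>u\<in>(Base ` K \<union> {Apex}) \<union> Cone ` K. f u)
      = (\<Sum>u\<in>Base ` K. f u) + f Apex + (\<Sum>u\<in>Cone ` K. f u)"
    using assms by (subst sum.union_disjoint; auto simp: add_ac sum.insert_if)
  ultimately show ?thesis by (simp add: sum.reindex inj_on_def)
qed

lemma bd_coeff_dim_0: "dim s = 0 \<Longrightarrow> bd_coeff dim face s r = 0"
  unfolding bd_coeff_def by simp

lemma bd_coeff_nonzero_imp_proper_face: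
  assumes cx: "delta_complex K dim face" and s: "s \<in> K"
    and nz: "(bd_coeff dim face s r :: 'f::field) \<noteq> 0"
  shows "r \<in> K \<and> proper_face K dim face r s"
proof -
  have d: "0 < dim s" using nz bd_coeff_dim_0 by (metis neq0_conv)
  have "(\<Sum>i\<le>dim s. if face s i = r then (-1) ^ i else 0) \<noteq> (0::'f)"
    using nz d unfolding bd_coeff_def by simp
  then have "\<exists>i\<in>{..dim s}. (if face s i = r then (-1) ^ i else 0) \<noteq> (0::'f)"
    by (rule contrapos_np) (rule sum.neutral, blast)
  then obtain i where i: "i \<le> dim s" "face s i = r" by (auto split: if_splits)
  then have "(r, s) \<in> face_rel K dim face" unfolding face_rel_def using s d by blast
  then show ?thesis
    unfolding proper_face_def using delta_complex_face[OF cx s d i(1)] i by (simp add: r_into_trancl')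
qed

lemma sum_mult_bd_coeff:
  assumes cx: "delta_complex K dim face" and s: "s \<in> K" and d: "0 < dim s"
  shows "(\<Sum>r\<in>K. g r * bd_coeff dim face s r) = (\<Sum>i\<le>dim s. (-1)^i * g (face s i))"
proof -
  have "(\<Sum>r\<in>K. g r * bd_coeff dim face s r) =
        (\<Sum>r\<in>K. \<Sum>i\<le>dim s. if face s i = r then g r * (-1)^i else 0)"
    using d unfolding bd_coeff_def by (simp add: sum_distrib_left if_distrib cong: if_cong)
  also have "\<dots> = (\<Sum>i\<le>dim s. \<Sum>r\<in>K. if face s i = r then g r * (-1)^i else 0)"
    by (rule sum.swap)
  also have "\<dots> = (\<Sum>i\<le>dim s. (-1)^i * g (face s i))"
    using delta_complex_finite[OF cx] delta_complex_face[OF cx s d]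
    by (intro sum.cong) (auto simp: mult.commute)
  finally show ?thesis .
qed

text \<open>The terms (i, j) with j < i and (j, i - 1) cancel, by the simplicial identity.\<close>

lemma alternating_double_sum_eq_0:
  fixes F :: "nat \<Rightarrow> nat \<Rightarrow> 'b"
  assumes n: "1 \<le> n" and F: "\<And>i j. i < j \<Longrightarrow> j \<le> n \<Longrightarrow> F j i = F i (j - 1)"
  shows "(\<Sum>i\<le>n. (-1)^i * (\<Sum>j\<le>n-1. if F i j = q then (-1)^j else 0)) = (0::'f::comm_ring_1)"
proof -
  define t where "t = (\<lambda>(i,j). (-1)^i * (if F i j = q then (-1)^j else (0::'f)))"
  define P where "P = {(i,j). i \<le> n \<and> j \<le> n - 1 \<and> j < i}"
  define Q where "Q = {(i,j). i \<le> n \<and> j \<le> n - 1 \<and> i \<le> j}"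
  have "(\<Sum>i\<le>n. (-1)^i * (\<Sum>j\<le>n-1. if F i j = q then (-1)^j else 0)) = sum t ({..n} \<times> {..n-1})"
    unfolding t_def by (simp add: sum_distrib_left sum.cartesian_product)
  also have "{..n} \<times> {..n-1} = P \<union> Q" unfolding P_def Q_def by auto
  also have "sum t (P \<union> Q) = sum t P + sum t Q"
    by (rule sum.union_disjoint) (auto simp: P_def Q_def intro: finite_subset[of _ "{..n} \<times> {..n}"])
  also have "sum t P = sum (\<lambda>x. - t x) Q"
  proof (rule sum.reindex_bij_witness[where i = "\<lambda>(i,j). (j+1, i)" and j = "\<lambda>(i,j). (j, i - 1)"])
    fix a assume "a \<in> P"
    then obtain i j where ij: "a = (i,j)" "i \<le> n" "j < i" unfolding P_def by auto
    have "(-1::'f)^i = - ((-1)^(i-1))" using ij by (cases i) auto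
    then show "- t (case a of (i, j) \<Rightarrow> (j, i - 1)) = t a"
      unfolding t_def using ij F[of j i] by auto
  qed (use n in \<open>auto simp: P_def Q_def\<close>)
  also have "sum (\<lambda>x. - t x) Q + sum t Q = 0" by (simp add: sum_negf)
  finally show ?thesis .
qed

lemma bd_coeff_bd_coeff_sum_eq_0:
  assumes cx: "delta_complex K dim face" and s: "s \<in> K"
  shows "(\<Sum>r\<in>K. bd_coeff dim face r q * bd_coeff dim face s r) = (0::'f::field)"
proof (cases "dim s < 2")
  case True
  then show ?thesis
    using delta_complex_face[OF cx s] by (cases "dim s = 0")
      (auto simp: bd_coeff_dim_0 sum_mult_bd_coeff[OF cx s])
next
  case False
  then have d: "0 < dim s" "2 \<le> dim s" by auto
  have "(\<Sum>r\<in>K. bd_coeff dim face r q * bd_coeff dim face s r) =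
        (\<Sum>i\<le>dim s. (-1)^i * (\<Sum>j\<le>dim s - 1. if face (face s i) j = q then (-1)^j else (0::'f)))"
    unfolding sum_mult_bd_coeff[OF cx s d(1)]
    using delta_complex_face[OF cx s d(1)] d by (intro sum.cong) (auto simp: bd_coeff_def)
  also have "\<dots> = 0"
    by (rule alternating_double_sum_eq_0) (use d delta_complex_face_face[OF cx s d(2)] in auto)
  finally show ?thesis .
qed

lemma augmentation_bd_coeff_sum_eq_0:
  assumes cx: "delta_complex K dim face" and s: "s \<in> K"
  shows "(\<Sum>r\<in>K. (if dim r = 0 then 1 else 0) * bd_coeff dim face s r) = (0::'f::field)"
proof (cases "dim s = 0")
  case False
  then have d: "0 < dim s" by simp
  have faces: "dim (face s i) = dim s - 1" if "i \<le> dim s" for i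
    using delta_complex_face[OF cx s d that] by simp
  show ?thesis
  proof (cases "dim s = 1")
    case True
    then have "{..dim s} = {0, 1}" by auto
    then show ?thesis unfolding sum_mult_bd_coeff[OF cx s d] using faces True by simp
  qed (use d in \<open>simp add: sum_mult_bd_coeff[OF cx s d] faces\<close>)
qed (simp add: bd_coeff_dim_0)

lemma cone_bd_cone_bd_sum_eq_0:
  assumes cx: "delta_complex K dim face" and v: "v \<in> cone_cx K"
  shows "(\<Sum>u\<in>cone_cx K. cone_bd dim face x u * cone_bd dim face u v) = (0::'f::field)"
proof -
  note sum_cone = sum_cone_cx[OF delta_complex_finite[OF cx]]
  consider (Base) s where "v = Base s" "s \<in> K" | (Apex) "v = Apex" | (Cone) s where "v = Cone s" "s \<in> K"
    using v by (cases v) auto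
  then show ?thesis
  proof cases
    case Base
    then show ?thesis by (cases x) (simp_all add: sum_cone bd_coeff_bd_coeff_sum_eq_0[OF cx])
  next
    case Cone
    have bd_outside: "bd_coeff dim face s q = 0" if "q \<notin> K" for q
      using bd_coeff_nonzero_imp_proper_face[OF cx \<open>s \<in> K\<close>] that by blast
    show ?thesis
    proof (cases x)
      case (Base q)
      then show ?thesis using Cone delta_complex_finite[OF cx] bd_outside[of q]
        by (cases "q \<in> K")
          (simp_all add: sum_cone sum_negf if_distrib[of "\<lambda>a. a * _"] if_distrib[of "\<lambda>a. _ * a"]
            cong: if_cong)
    next
      case Apex
      then show ?thesis using Cone augmentation_bd_coeff_sum_eq_0[OF cx \<open>s \<in> K\<close>]
        by (simp add: sum_cone if_distrib[of "\<lambda>a. a * _"] if_distrib[of uminus] cong: if_cong)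
    next
      case (Cone q)
      then show ?thesis using \<open>v = Cone s\<close> bd_coeff_bd_coeff_sum_eq_0[OF cx \<open>s \<in> K\<close>]
        by (simp add: sum_cone)
    qed
  qed (simp add: sum_cone)
qed

lemma cone_bd_nonzero_imp_in_cone_cx:
  assumes cx: "delta_complex K dim face" and u: "u \<in> cone_cx K"
    and nz: "(cone_bd dim face x u :: 'f::field) \<noteq> 0"
  shows "x \<in> cone_cx K"
  using u nz bd_coeff_nonzero_imp_proper_face[OF cx]
  by (cases x; cases u) (auto split: if_splits)

definition cone_boundary ::
    "'a set \<Rightarrow> ('a \<Rightarrow> nat) \<Rightarrow> ('a \<Rightarrow> nat \<Rightarrow> 'a) \<Rightarrow> ('a cone_simplex \<Rightarrow> 'f::field) \<Rightarrow> 'a cone_simplex \<Rightarrow> 'f"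
  where "cone_boundary K dim face c x = (\<Sum>u\<in>cone_cx K. cone_bd dim face x u * c u)"

lemma cone_boundary_boundary:
  assumes cx: "delta_complex K dim face"
  shows "cone_boundary K dim face (cone_boundary K dim face c) x = 0"
proof -
  have "cone_boundary K dim face (cone_boundary K dim face c) x
      = (\<Sum>u\<in>cone_cx K. \<Sum>v\<in>cone_cx K. cone_bd dim face x u * cone_bd dim face u v * c v)"
    unfolding cone_boundary_def by (simp add: sum_distrib_left mult.assoc)
  also have "\<dots> = (\<Sum>v\<in>cone_cx K. (\<Sum>u\<in>cone_cx K. cone_bd dim face x u * cone_bd dim face u v) * c v)"
    by (subst sum.swap) (simp add: sum_distrib_right)
  also have "\<dots> = 0" by (simp add: cone_bd_cone_bd_sum_eq_0[OF cx])
  finally show ?thesis .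
qed

lemma inj_on_filt_key:
  "inj_on mn K \<Longrightarrow> inj_on mx K \<Longrightarrow> inj_on (filt_key mn mx) (cone_cx K)"
  unfolding inj_on_def cone_cx_def by auto

text \<open>Downward induction along key: the row x of V W = I, evaluated at columns y with
  key y \<le> key x, collapses to V x x * W x y, because W is already known to be upper
  triangular in the rows above x.\<close>

lemma upper_triangular_right_inverse_diag_nonzero:
  fixes key :: "'b \<Rightarrow> 'k::linorder" and V W :: "'b \<Rightarrow> 'b \<Rightarrow> 'f::field"
  assumes fin: "finite S" and inj: "inj_on key S"
    and upper: "\<forall>x\<in>S. \<forall>y\<in>S. V x y \<noteq> 0 \<longrightarrow> key x \<le> key y"
    and inv: "\<forall>x\<in>S. \<forall>y\<in>S. (\<Sum>u\<in>S. V x u * W u y) = (if x = y then 1 else 0)"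
    and x: "x \<in> S"
  shows "V x x \<noteq> 0"
proof -
  have "x \<in> S \<longrightarrow> V x x * W x x = 1 \<and> (\<forall>y\<in>S. key y < key x \<longrightarrow> W x y = 0)" for x
  proof (induction x rule: measure_induct_rule[where f = "\<lambda>x. card {u\<in>S. key x < key u}"])
    case (less x)
    show ?case
    proof
      assume xS: "x \<in> S"
      have W_above: "W u y = 0" if "u \<in> S" "key x < key u" "y \<in> S" "key y < key u" for u y
      proof -
        have "{v\<in>S. key u < key v} \<subset> {v\<in>S. key x < key v}" using that by auto
        then have "card {v\<in>S. key u < key v} < card {v\<in>S. key x < key v}"
          by (rule psubset_card_mono[rotated]) (use fin in simp)
        then show ?thesis using less that by blast
      qed
      have row: "(\<Sum>u\<in>S. V x u * W u y) = V x x * W x y" if "y \<in> S" "key y \<le> key x" for y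
      proof -
        have "V x u * W u y = 0" if "u \<in> S - {x}" for u
        proof (cases "V x u = 0")
          case False
          then have "key x < key u"
            using upper inj xS that unfolding inj_on_def by (metis DiffE insertI1 order_le_less)
          then show ?thesis using W_above that \<open>y \<in> S\<close> \<open>key y \<le> key x\<close> by auto
        qed simp
        then have "(\<Sum>u\<in>S - {x}. V x u * W u y) = 0" by (intro sum.neutral) blast
        then show ?thesis using fin xS by (simp add: sum.remove)
      qed
      have diag: "V x x * W x x = 1" using row[of x] inv xS by auto
      moreover have "W x y = 0" if "y \<in> S" "key y < key x" for y
      proof -
        have "x \<noteq> y" using that by auto
        then have "V x x * W x y = 0" using row[of y] inv xS that by simp
        then show ?thesis using diag by auto
      qed
      ultimately show "V x x * W x x = 1 \<and> (\<forall>y\<in>S. key y < key x \<longrightarrow> W x y = 0)" by blast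
    qed
  qed
  then show ?thesis using x by (metis mult_zero_left zero_neq_one)
qed

locale cone_persistence_pair =
  fixes K :: "'a set" and dim :: "'a \<Rightarrow> nat" and face :: "'a \<Rightarrow> nat \<Rightarrow> 'a"
    and mn mx :: "'a \<Rightarrow> int"
    and V R :: "'a cone_simplex \<Rightarrow> 'a cone_simplex \<Rightarrow> 'f::field"
    and \<sigma> \<tau> :: 'a
  assumes cx: "delta_complex K dim face"
    and interval: "s \<in> K \<Longrightarrow> mn s < mx s"
    and nested: "s \<in> K \<Longrightarrow> t \<in> K \<Longrightarrow> proper_face K dim face s t \<Longrightarrow> mn s < mn t \<and> mx t < mx s"
    and filt_key_inj: "inj_on (filt_key mn mx) (cone_cx K)"
    and V_upper: "x \<in> cone_cx K \<Longrightarrow> y \<in> cone_cx K \<Longrightarrow> V x y \<noteq> 0 \<Longrightarrow>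
                   filt_key mn mx x \<le> filt_key mn mx y"
    and V_right_inverse: "\<exists>W. \<forall>x\<in>cone_cx K. \<forall>y\<in>cone_cx K.
                            (\<Sum>u\<in>cone_cx K. V x u * W u y) = (if x = y then 1 else 0)"
    and R_DV: "x \<in> cone_cx K \<Longrightarrow> y \<in> cone_cx K \<Longrightarrow> R x y = cone_boundary K dim face (\<lambda>u. V u y) x"
    and \<tau>K: "\<tau> \<in> K"
    and pair: "is_low mn mx K (\<lambda>r. R r (Cone \<tau>)) (Base \<sigma>)"
    and death_after_birth: "mx \<tau> < mn \<sigma>"
begin

definition pair_chain :: "'a cone_simplex \<Rightarrow> 'f" where
  "pair_chain = (\<lambda>x. if x \<in> cone_cx K \<and> (case x of Base s \<Rightarrow> mx \<tau> \<le> mx s | _ \<Rightarrow> True)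
                     then V x (Cone \<tau>) else 0)"

definition pair_cycle :: "'a cone_simplex \<Rightarrow> 'f" where
  "pair_cycle = cone_boundary K dim face pair_chain"

lemma pair_cycle_nonzero_imp_bd_nonzero:
  assumes "pair_cycle x \<noteq> 0"
  obtains u where "u \<in> cone_cx K" "(cone_bd dim face x u :: 'f) \<noteq> 0" "pair_chain u \<noteq> 0"
proof -
  have "\<exists>u\<in>cone_cx K. cone_bd dim face x u * pair_chain u \<noteq> 0"
    using assms unfolding pair_cycle_def cone_boundary_def by (rule contrapos_np) (rule sum.neutral, blast)
  then show thesis using that by auto
qed

lemma pair_cycle_differs_from_R_column:
  assumes x: "x \<in> cone_cx K" and ne: "pair_cycle x \<noteq> R x (Cone \<tau>)"
  shows "\<exists>r. x = Base r \<and> mn r < mn \<sigma>"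
proof -
  have "\<exists>u\<in>cone_cx K. (cone_bd dim face x u :: 'f) \<noteq> 0 \<and> pair_chain u \<noteq> V u (Cone \<tau>)"
  proof (rule ccontr)
    assume "\<not> ?thesis"
    then have "pair_cycle x = cone_boundary K dim face (\<lambda>u. V u (Cone \<tau>)) x"
      unfolding pair_cycle_def cone_boundary_def by (intro sum.cong) auto
    then show False using ne R_DV x \<tau>K by simp
  qed
  then obtain u where u: "u \<in> cone_cx K" "(cone_bd dim face x u :: 'f) \<noteq> 0" "pair_chain u \<noteq> V u (Cone \<tau>)"
    by blast
  then obtain s where s: "u = Base s" "s \<in> K" "mx s < mx \<tau>"
    unfolding pair_chain_def by (auto split: cone_simplex.splits if_splits)
  then obtain r where r: "x = Base r" "(bd_coeff dim face s r :: 'f) \<noteq> 0"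
    using u(2) by (cases x) auto
  then have "mn r < mn s"
    using nested bd_coeff_nonzero_imp_proper_face[OF cx s(2)] s(2) by blast
  then show ?thesis using r(1) interval[OF s(2)] s(3) death_after_birth by auto
qed

lemma R_column_support:
  assumes "x \<in> cone_cx K" "R x (Cone \<tau>) \<noteq> 0"
  shows "\<exists>r. x = Base r \<and> mn r \<le> mn \<sigma>"
proof -
  have "filt_key mn mx x \<le> (0, mn \<sigma>)" using pair assms unfolding is_low_def by auto
  then show ?thesis by (cases x) auto
qed

lemma pair_cycle_Base_sigma: "pair_cycle (Base \<sigma>) \<noteq> 0"
proof -
  have "Base \<sigma> \<in> cone_cx K" "R (Base \<sigma>) (Cone \<tau>) \<noteq> 0" using pair unfolding is_low_def by auto
  then show ?thesis using pair_cycle_differs_from_R_column by fastforce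
qed

lemma pair_cycle_support_min:
  assumes "pair_cycle x \<noteq> 0"
  shows "\<exists>r\<in>K. x = Base r \<and> mn r \<le> mn \<sigma>"
proof -
  obtain u where "u \<in> cone_cx K" "(cone_bd dim face x u :: 'f) \<noteq> 0"
    using pair_cycle_nonzero_imp_bd_nonzero[OF assms] .
  then have x: "x \<in> cone_cx K" by (rule cone_bd_nonzero_imp_in_cone_cx[OF cx])
  have "\<exists>r. x = Base r \<and> mn r \<le> mn \<sigma>"
  proof (cases "pair_cycle x = R x (Cone \<tau>)")
    case True
    then show ?thesis using R_column_support[OF x] assms by simp
  next
    case False
    then show ?thesis using pair_cycle_differs_from_R_column[OF x] by fastforce
  qed
  then show ?thesis using x by auto
qed

lemma pair_cycle_support_max:
  assumes "pair_cycle (Base r) \<noteq> 0"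
  shows "mx \<tau> \<le> mx r"
proof -
  obtain u where u: "u \<in> cone_cx K" "(cone_bd dim face (Base r) u :: 'f) \<noteq> 0" "pair_chain u \<noteq> 0"
    using pair_cycle_nonzero_imp_bd_nonzero[OF assms] .
  show ?thesis
  proof (cases u)
    case (Base s)
    then have s: "s \<in> K" "mx \<tau> \<le> mx s" "(bd_coeff dim face s r :: 'f) \<noteq> 0"
      using u unfolding pair_chain_def by (auto split: if_splits)
    then show ?thesis using nested bd_coeff_nonzero_imp_proper_face[OF cx] by fastforce
  next
    case (Cone s)
    then have "r = s" "V (Cone s) (Cone \<tau>) \<noteq> 0"
      using u unfolding pair_chain_def by (auto split: if_splits)
    then show ?thesis using V_upper[of "Cone s" "Cone \<tau>"] u(1) Cone \<tau>K by simp
  qed (use u in simp)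
qed

text \<open>Only the column \<omega>*\<tau> of the boundary contributes to the row \<tau>: every base coface of \<tau>
  has smaller max, so it was cut out of the chain.\<close>

lemma pair_cycle_Base_tau: "pair_cycle (Base \<tau>) = V (Cone \<tau>) (Cone \<tau>)"
proof -
  have "cone_bd dim face (Base \<tau>) u * pair_chain u = 0" if "u \<in> cone_cx K - {Cone \<tau>}" for u
  proof (cases u)
    case (Base s)
    show ?thesis
    proof (cases "(bd_coeff dim face s \<tau> :: 'f) = 0")
      case False
      have "s \<in> K" using Base that by simp
      then have "mx s < mx \<tau>"
        using nested[OF \<tau>K] bd_coeff_nonzero_imp_proper_face[OF cx _ False] by blast
      then show ?thesis using Base unfolding pair_chain_def by simp
    qed (simp add: Base)
  qed (use that in auto)
  then have "(\<Sum>u\<in>cone_cx K - {Cone \<tau>}. cone_bd dim face (Base \<tau>) u * pair_chain u) = 0"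
    by (intro sum.neutral) blast
  then have "pair_cycle (Base \<tau>) = cone_bd dim face (Base \<tau>) (Cone \<tau>) * pair_chain (Cone \<tau>)"
    unfolding pair_cycle_def cone_boundary_def using \<tau>K finite_cone_cx[OF delta_complex_finite[OF cx]]
    by (simp add: sum.remove[of _ "Cone \<tau>"])
  then show ?thesis using \<tau>K unfolding pair_chain_def by simp
qed

lemma pair_cycle_support:
  assumes "pair_cycle x \<noteq> 0"
  shows "x \<in> Base ` {s\<in>K. mx \<tau> \<le> mx s \<and> mn s \<le> mn \<sigma>}"
  using pair_cycle_support_min[OF assms] pair_cycle_support_max assms by blast

lemma pair_cycle_Base_tau_nonzero: "pair_cycle (Base \<tau>) \<noteq> 0"
proof -
  obtain W where W: "\<forall>x\<in>cone_cx K. \<forall>y\<in>cone_cx K.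
      (\<Sum>u\<in>cone_cx K. V x u * W u y) = (if x = y then 1 else 0)"
    using V_right_inverse by blast
  have "V (Cone \<tau>) (Cone \<tau>) \<noteq> 0"
    by (rule upper_triangular_right_inverse_diag_nonzero
        [OF finite_cone_cx[OF delta_complex_finite[OF cx]] filt_key_inj _ W])
      (use V_upper \<tau>K in auto)
  then show ?thesis by (simp add: pair_cycle_Base_tau)
qed

end

theorem claim6p3:
  fixes K :: "'a set" and dim :: "'a \<Rightarrow> nat" and face :: "'a \<Rightarrow> nat \<Rightarrow> 'a"
    and mn mx :: "'a \<Rightarrow> int"
    and D R V :: "'a cone_simplex \<Rightarrow> 'a cone_simplex \<Rightarrow> 'f::field"
    and \<sigma> \<tau> :: 'a
  assumes cx: "delta_complex K dim face"
    and interval: "\<forall>s\<in>K. mn s < mx s"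
    and nested: "\<forall>s\<in>K. \<forall>t\<in>K. proper_face K dim face s t \<longrightarrow>
                   mn s < mn t \<and> mn t < mx t \<and> mx t < mx s"
    and mn_inj: "inj_on mn K" and mx_inj: "inj_on mx K"
    and D_def: "D = cone_bd dim face"
    and V_upper: "\<forall>x\<in>cone_cx K. \<forall>y\<in>cone_cx K. V x y \<noteq> 0 \<longrightarrow> filt_key mn mx x \<le> filt_key mn mx y"
    and V_inv: "\<exists>W. \<forall>x\<in>cone_cx K. \<forall>y\<in>cone_cx K.
                  (\<Sum>u\<in>cone_cx K. V x u * W u y) = (if x = y then 1 else 0) \<and>
                  (\<Sum>u\<in>cone_cx K. W x u * V u y) = (if x = y then 1 else 0)"
    and R_DV: "\<forall>x\<in>cone_cx K. \<forall>y\<in>cone_cx K. R x y = (\<Sum>u\<in>cone_cx K. D x u * V u y)"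
    and R_reduced: "\<forall>y1\<in>cone_cx K. \<forall>y2\<in>cone_cx K. \<forall>x. y1 \<noteq> y2 \<longrightarrow>
                      \<not> (is_low mn mx K (\<lambda>r. R r y1) x \<and> is_low mn mx K (\<lambda>r. R r y2) x)"
    and \<sigma>K: "\<sigma> \<in> K" and \<tau>K: "\<tau> \<in> K"
    and pair: "is_low mn mx K (\<lambda>r. R r (Cone \<tau>)) (Base \<sigma>)"
    and db: "mn \<sigma> > mx \<tau>"
  shows "let b = mx \<tau>; d = mn \<sigma>;
             c = (\<lambda>x. if x \<in> cone_cx K \<and> (case x of Base s \<Rightarrow> b \<le> mx s | _ \<Rightarrow> True)
                      then V x (Cone \<tau>) else 0);
             z = (\<lambda>x. \<Sum>u\<in>cone_cx K. D x u * c u)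
         in (\<forall>x. (\<Sum>u\<in>cone_cx K. D x u * z u) = 0)
            \<and> (\<forall>x. z x \<noteq> 0 \<longrightarrow> x \<in> Base ` {s\<in>K. b \<le> mx s \<and> mn s \<le> d})
            \<and> z (Base \<sigma>) \<noteq> 0 \<and> z (Base \<tau>) \<noteq> 0"
proof -
  \<comment> \<open>R need not be reduced: only low R[\<omega>*\<tau>] = \<sigma> is used.\<close>
  interpret cone_persistence_pair K dim face mn mx V R \<sigma> \<tau>
  proof
    show "inj_on (filt_key mn mx) (cone_cx K)" using mn_inj mx_inj by (rule inj_on_filt_key)
    show "\<exists>W. \<forall>x\<in>cone_cx K. \<forall>y\<in>cone_cx K.
            (\<Sum>u\<in>cone_cx K. V x u * W u y) = (if x = y then 1 else 0)"
      using V_inv by blast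
  qed (use cx interval nested V_upper R_DV \<tau>K pair db in \<open>auto simp: D_def cone_boundary_def\<close>)
  have chain: "(if u \<in> cone_cx K \<and> (case u of Base s \<Rightarrow> mx \<tau> \<le> mx s | _ \<Rightarrow> True)
      then V u (Cone \<tau>) else 0) = pair_chain u" for u
    by (simp add: pair_chain_def)
  have cycle: "(\<Sum>u\<in>cone_cx K. cone_bd dim face x u * pair_chain u) = pair_cycle x" for x
    by (simp add: pair_cycle_def cone_boundary_def)
  have "cone_boundary K dim face pair_cycle x = 0" for x
    unfolding pair_cycle_def by (rule cone_boundary_boundary[OF cx])
  then show ?thesis
    unfolding Let_def D_def chain cycle
    using pair_cycle_support pair_cycle_Base_sigma pair_cycle_Base_tau_nonzero
    by (simp add: cone_boundary_def)
qed

end
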